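(* Let $(\mathbb X,d,\delta)$ be a uniform dilation structure and $x\in\mathbb X$. Then there are $r>0$ and $\varepsilon_0>0$ such that for all $\varepsilon\in(0,\varepsilon_0]$ and all $u,v\in B^d(x,r)$ the expression $\Sigma^x_\varepsilon(u,v)=\delta^x_{\varepsilon^{-1}}\delta^{\delta^x_\varepsilon u}_\varepsilon v$ is defined and belongs to $U(x)$.
   Context: A quasimetric space $(\mathbb X,d)$ is a topological space $\mathbb X$ with a map $d:\mathbb X\times\mathbb X\to[0,\infty)$ such that: (i) $d(u,v)=0$ iff $u=v$; (ii) $d(u,v)\le c_{\mathbb X}\,d(v,u)$ for a constant $1\le c_{\mathbb X}<\infty$; (iii) $d(u,v)\le Q_{\mathbb X}(d(u,w)+d(w,v))$ for a constant $1\le Q_{\mathbb X}<\infty$; (iv) $d$ is upper semicontinuous in the first argument. The topology of $\mathbb X$ coincides with the one induced by $d$. $B^d(x,r)=\{y: d(y,x)<r\}$, $\bar B^d(x,r)$ its closure; boundedly compact means closed bounded sets are compact. A dilation structure $(\mathbb X,d,\delta)$ is a complete boundedly compact quasimetric space with $d$ continuous in both arguments, satisfying: (A0) For every $x$ and $\varepsilon\in(0,1]$ there are a neighborhood $U(x)$ of $x$ and homeomorphisms $\delta^x_\varepsilon:U(x)\to V_\varepsilon(x)$, $\delta^x_{\varepsilon^{-1}}:W_{\varepsilon^{-1}}(x)\to U(x)$ with $V_\varepsilon(x)\subseteq W_{\varepsilon^{-1}}(x)\subseteq U(x)$; the family is continuous in $\varepsilon$; there is $R>0$ with $\bar B^d(x,R)\subseteq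 U(x)$ for all $x$, and for all $\varepsilon<1$, $\tilde r>0$ with $\bar B^d(x,\tilde r)\subseteq U(x)$: $B^d(x,\tilde r\varepsilon)\subseteq\delta^x_\varepsilon B^d(x,\tilde r)\subset B^d(x,\tilde r)$. (A1) $\delta^x_\varepsilon x=x$, $\delta^x_1=\mathrm{id}$, $\lim_{\varepsilon\to0}\delta^x_\varepsilon y=x$ for $y\in U(x)$. (A2) $\delta^x_\varepsilon\delta^x_\mu u=\delta^x_{\varepsilon\mu}u$ whenever both sides are defined. (A3) $d^x(u,v)=\lim_{\varepsilon\to0}\frac1\varepsilon d(\delta^x_\varepsilon u,\delta^x_\varepsilon v)$ exists uniformly in $u,v\in\bar B^d(x,R)$. The dilation structure is uniform if the convergence in (A3) is also uniform in $x$ in any compact set. $\Sigma^x_\varepsilon(u,v)$ being defined means $v\in U(\delta^x_\varepsilon u)$ and $\delta^{\delta^x_\varepsilon u}_\varepsilon v\in W_{\varepsilon^{-1}}(x)$. *)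

theory Defs
  imports "HOL-Analysis.Analysis"
begin

text \<open>The space X is the whole type 'a (with its topology).  d is the quasi-distance.
  U x is the neighbourhood U(x); V x e is V_e(x) (for 0 < e <= 1);
  W x e is W_{1/e}(x) (for 0 < e <= 1), the domain of delta x (1/e).\<close>

definition qball :: "('a \<Rightarrow> 'a \<Rightarrow> real) \<Rightarrow> 'a \<Rightarrow> real \<Rightarrow> 'a set" where
  "qball d x r = {y. d y x < r}"

definition quasimetric_space :: "('a::topological_space \<Rightarrow> 'a \<Rightarrow> real) \<Rightarrow> bool" where
  "quasimetric_space d \<longleftrightarrow>
     (\<forall>u v. 0 \<le> d u v) \<and>
     (\<forall>u v. d u v = 0 \<longleftrightarrow> u = v) \<and>
     (\<exists>c\<ge>1. \<forall>u v. d u v \<le> c * d v u) \<and>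
     (\<exists>Q\<ge>1. \<forall>u v w. d u v \<le> Q * (d u w + d w v)) \<and>
     (\<forall>v u t. d u v < t \<longrightarrow> (\<exists>S. open S \<and> u \<in> S \<and> (\<forall>u'\<in>S. d u' v < t))) \<and>
     (\<forall>S. open S \<longleftrightarrow> (\<forall>x\<in>S. \<exists>r>0. qball d x r \<subseteq> S))"

definition qcomplete :: "('a::topological_space \<Rightarrow> 'a \<Rightarrow> real) \<Rightarrow> bool" where
  "qcomplete d \<longleftrightarrow>
     (\<forall>s::nat \<Rightarrow> 'a. (\<forall>e>0. \<exists>N. \<forall>m\<ge>N. \<forall>n\<ge>N. d (s m) (s n) < e) \<longrightarrow> (\<exists>l. s \<longlonglongrightarrow> l))"

definition qbounded :: "('a \<Rightarrow> 'a \<Rightarrow> real) \<Rightarrow> 'a set \<Rightarrow> bool" where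
  "qbounded d A \<longleftrightarrow> (\<exists>x r. A \<subseteq> qball d x r)"

definition boundedly_compact :: "('a::topological_space \<Rightarrow> 'a \<Rightarrow> real) \<Rightarrow> bool" where
  "boundedly_compact d \<longleftrightarrow> (\<forall>A. closed A \<and> qbounded d A \<longrightarrow> compact A)"

definition dil_dom :: "('a \<Rightarrow> 'a set) \<Rightarrow> ('a \<Rightarrow> real \<Rightarrow> 'a set) \<Rightarrow> 'a \<Rightarrow> real \<Rightarrow> 'a set" where
  "dil_dom U W x mu = (if mu \<le> 1 then U x else W x (1 / mu))"

definition dilation_structure ::
  "('a::topological_space \<Rightarrow> 'a \<Rightarrow> real) \<Rightarrow> ('a \<Rightarrow> 'a set) \<Rightarrow> ('a \<Rightarrow> real \<Rightarrow> 'a set)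
    \<Rightarrow> ('a \<Rightarrow> real \<Rightarrow> 'a set) \<Rightarrow> ('a \<Rightarrow> real \<Rightarrow> 'a \<Rightarrow> 'a) \<Rightarrow> real \<Rightarrow> bool" where
  "dilation_structure d U V W \<delta> R \<longleftrightarrow>
     quasimetric_space d \<and> qcomplete d \<and> boundedly_compact d \<and>
     continuous_on UNIV (\<lambda>p. d (fst p) (snd p)) \<and>
     \<comment> \<open>(A0)\<close>
     (\<forall>x. x \<in> interior (U x)) \<and>
     (\<forall>x. \<forall>e\<in>{0<..1}.
        (\<exists>g. homeomorphism (U x) (V x e) (\<delta> x e) g) \<and>
        (\<exists>g. homeomorphism (W x e) (U x) (\<delta> x (1 / e)) g) \<and>
        V x e \<subseteq> W x e \<and> W x e \<subseteq> U x) \<and>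
     (\<forall>x. \<forall>y\<in>U x. continuous_on {0<..1} (\<lambda>e. \<delta> x e y)) \<and>
     R > 0 \<and> (\<forall>x. closure (qball d x R) \<subseteq> U x) \<and>
     (\<forall>x. \<forall>e\<in>{0<..<1}. \<forall>r>0. closure (qball d x r) \<subseteq> U x \<longrightarrow>
        qball d x (r * e) \<subseteq> \<delta> x e ` qball d x r \<and> \<delta> x e ` qball d x r \<subset> qball d x r) \<and>
     \<comment> \<open>(A1)\<close>
     (\<forall>x. \<forall>e\<in>{0<..1}. \<delta> x e x = x) \<and>
     (\<forall>x. \<forall>y\<in>U x. \<delta> x 1 y = y) \<and>
     (\<forall>x. \<forall>y\<in>U x. ((\<lambda>e. \<delta> x e y) \<longlongrightarrow> x) (at_right 0)) \<and>
     \<comment> \<open>(A2)\<close>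
     (\<forall>x e mu u. 0 < e \<and> 0 < mu \<and> u \<in> dil_dom U W x mu \<and> \<delta> x mu u \<in> dil_dom U W x e
        \<and> u \<in> dil_dom U W x (e * mu) \<longrightarrow> \<delta> x e (\<delta> x mu u) = \<delta> x (e * mu) u) \<and>
     \<comment> \<open>(A3)\<close>
     (\<forall>x. \<exists>dx. \<forall>t>0. \<exists>\<eta>>0. \<forall>e\<in>{0<..<\<eta>}. e \<le> 1 \<longrightarrow>
        (\<forall>u\<in>closure (qball d x R). \<forall>v\<in>closure (qball d x R).
           \<bar>d (\<delta> x e u) (\<delta> x e v) / e - dx u v\<bar> < t))"

definition uniform_dilation_structure ::
  "('a::topological_space \<Rightarrow> 'a \<Rightarrow> real) \<Rightarrow> ('a \<Rightarrow> 'a set) \<Rightarrow> ('a \<Rightarrow> real \<Rightarrow> 'a set)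
    \<Rightarrow> ('a \<Rightarrow> real \<Rightarrow> 'a set) \<Rightarrow> ('a \<Rightarrow> real \<Rightarrow> 'a \<Rightarrow> 'a) \<Rightarrow> real \<Rightarrow> bool" where
  "uniform_dilation_structure d U V W \<delta> R \<longleftrightarrow>
     dilation_structure d U V W \<delta> R \<and>
     (\<exists>dd. \<forall>K. compact K \<longrightarrow> (\<forall>t>0. \<exists>\<eta>>0. \<forall>x\<in>K. \<forall>e\<in>{0<..<\<eta>}. e \<le> 1 \<longrightarrow>
        (\<forall>u\<in>closure (qball d x R). \<forall>v\<in>closure (qball d x R).
           \<bar>d (\<delta> x e u) (\<delta> x e v) / e - dd x u v\<bar> < t)))"

definition Sigma_defined ::
  "('a \<Rightarrow> 'a set) \<Rightarrow> ('a \<Rightarrow> real \<Rightarrow> 'a set) \<Rightarrow> ('a \<Rightarrow> real \<Rightarrow> 'a \<Rightarrow> 'a) \<Rightarrow> 'a \<Rightarrow> real \<Rightarrow> 'a \<Rightarrow> 'a \<Rightarrow> bool" where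
  "Sigma_defined U W \<delta> x e u v \<longleftrightarrow>
     v \<in> U (\<delta> x e u) \<and> \<delta> (\<delta> x e u) e v \<in> W x e"

definition Sigma :: "('a \<Rightarrow> real \<Rightarrow> 'a \<Rightarrow> 'a) \<Rightarrow> 'a \<Rightarrow> real \<Rightarrow> 'a \<Rightarrow> 'a \<Rightarrow> 'a" where
  "Sigma \<delta> x e u v = \<delta> x (1 / e) (\<delta> (\<delta> x e u) e v)"

end

theory Submission
  imports Defs
begin

text \<open>Uniform convergence in (A3) bounds the rescaled distances \<open>d (\<delta>\<^sup>y\<^sub>\<epsilon> w) y / \<epsilon>\<close>
  uniformly for \<open>y\<close> in a compact set, i.e. dilations move points towards the base point
  at a linear rate. Precomposing with a fixed dilation \<open>\<delta>\<^sup>y\<^sub>\<mu>\<close> shrinks the constant of that rate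
  to any prescribed \<open>t > 0\<close>. With \<open>t\<close> small compared with \<open>R\<close> and the quasi-triangle
  constant, both \<open>y = \<delta>\<^sup>x\<^sub>\<epsilon> u\<close> and \<open>\<delta>\<^sup>y\<^sub>\<epsilon> v\<close> lie in \<open>B(x, R \<epsilon>) \<subseteq> \<delta>\<^sup>x\<^sub>\<epsilon> B(x, R)\<close>, which is
  contained in the domain \<open>W\<^bsub>1/\<epsilon>\<^esub>(x)\<close> of \<open>\<delta>\<^sup>x\<^bsub>1/\<epsilon>\<^esub>\<close>.\<close>

locale dilation_space =
  fixes d :: "'a::topological_space \<Rightarrow> 'a \<Rightarrow> real"
    and U :: "'a \<Rightarrow> 'a set" and V W :: "'a \<Rightarrow> real \<Rightarrow> 'a set"
    and \<delta> :: "'a \<Rightarrow> real \<Rightarrow> 'a \<Rightarrow> 'a" and R :: real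
  assumes dilation_structure: "dilation_structure d U V W \<delta> R"
begin

lemma quasimetric: "quasimetric_space d"
  using dilation_structure unfolding dilation_structure_def by blast

lemma quasi_symmetric: "\<exists>c\<ge>1. \<forall>u v. d u v \<le> c * d v u"
  using quasimetric unfolding quasimetric_space_def by (elim conjE) assumption

lemma quasi_triangle: "\<exists>Q\<ge>1. \<forall>u v w. d u v \<le> Q * (d u w + d w v)"
  using quasimetric unfolding quasimetric_space_def by (elim conjE) assumption

lemma dist_self [simp]: "d x x = 0"
proof -
  have "\<forall>u v. d u v = 0 \<longleftrightarrow> u = v"
    using quasimetric unfolding quasimetric_space_def by (elim conjE) assumption
  then show ?thesis
    by simp
qed

lemma R_pos: "R > 0"
  using dilation_structure unfolding dilation_structure_def by blast

lemma closure_ball_subset_U: "closure (qball d x R) \<subseteq> U x"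
proof -
  have "\<forall>x. closure (qball d x R) \<subseteq> U x"
    using dilation_structure unfolding dilation_structure_def by (elim conjE) assumption
  then show ?thesis ..
qed

lemma ball_subset_U: "qball d x R \<subseteq> U x"
  using closure_ball_subset_U closure_subset by blast

lemma center_in_ball: "x \<in> qball d x R"
  using R_pos by (simp add: qball_def)

lemma compact_closure_ball: "compact (closure (qball d x R))"
proof -
  have "continuous_on UNIV (\<lambda>p. d (fst p) (snd p))"
    using dilation_structure unfolding dilation_structure_def by blast
  moreover have "continuous_on UNIV (\<lambda>z. (z, x))"
    by (intro continuous_intros)
  ultimately have "continuous_on UNIV (\<lambda>z. d z x)"
    using continuous_on_compose2 by fastforce
  then have "closed {z. d z x \<le> R}"
    by (rule closed_Collect_le) (intro continuous_intros)
  then have "closure (qball d x R) \<subseteq> {z. d z x \<le> R}"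
    by (intro closure_minimal) (auto simp: qball_def)
  then have "qbounded d (closure (qball d x R))"
    unfolding qbounded_def by (intro exI[of _ x] exI[of _ "R + 1"]) (auto simp: qball_def)
  moreover have "boundedly_compact d"
    using dilation_structure unfolding dilation_structure_def by blast
  ultimately show ?thesis
    unfolding boundedly_compact_def by simp
qed

lemma dilation_image_U_subset_W:
  assumes "0 < e" "e \<le> 1"
  shows "\<delta> x e ` U x \<subseteq> W x e"
proof -
  have "\<exists>g. homeomorphism (U x) (V x e) (\<delta> x e) g" "V x e \<subseteq> W x e"
    using dilation_structure assms unfolding dilation_structure_def by auto
  then show ?thesis
    unfolding homeomorphism_def by blast
qed

lemma inverse_dilation_image_W:
  assumes "0 < e" "e \<le> 1"
  shows "\<delta> x (1 / e) ` W x e = U x"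
proof -
  have "\<exists>g. homeomorphism (W x e) (U x) (\<delta> x (1 / e)) g"
    using dilation_structure assms unfolding dilation_structure_def by auto
  then show ?thesis
    unfolding homeomorphism_def by blast
qed

lemma dilation_ball:
  assumes "0 < e" "e < 1" "0 < r" "closure (qball d x r) \<subseteq> U x"
  shows "qball d x (r * e) \<subseteq> \<delta> x e ` qball d x r" "\<delta> x e ` qball d x r \<subseteq> qball d x r"
proof -
  have "qball d x (r * e) \<subseteq> \<delta> x e ` qball d x r \<and> \<delta> x e ` qball d x r \<subset> qball d x r"
    using dilation_structure assms unfolding dilation_structure_def by simp
  then show "qball d x (r * e) \<subseteq> \<delta> x e ` qball d x r" "\<delta> x e ` qball d x r \<subseteq> qball d x r"
    by auto
qed

lemma dilation_fixes_center: "0 < e \<Longrightarrow> e \<le> 1 \<Longrightarrow> \<delta> x e x = x"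
  using dilation_structure unfolding dilation_structure_def by auto

lemma dilation_compose:
  assumes "0 < e" "e \<le> 1" "0 < \<mu>" "\<mu> \<le> 1" "u \<in> U x" "\<delta> x \<mu> u \<in> U x"
  shows "\<delta> x e (\<delta> x \<mu> u) = \<delta> x (e * \<mu>) u"
proof -
  have "e * \<mu> \<le> 1"
    using assms by (simp add: mult_le_one)
  then show ?thesis
    using dilation_structure assms unfolding dilation_structure_def dil_dom_def by auto
qed

lemma Sigma_defined_if_contracting:
  assumes Q: "Q \<ge> 1" "\<And>u v w. d u v \<le> Q * (d u w + d w v)" and t: "0 < t" "2 * Q * t = R"
    and \<epsilon>: "0 < \<epsilon>" "\<epsilon> < 1" and "\<rho> \<le> R"
    and contract: "\<And>y v. y \<in> closure (qball d x R) \<Longrightarrow> v \<in> qball d y \<rho> \<Longrightarrow> d (\<delta> y \<epsilon> v) y < t * \<epsilon>"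
    and near: "d (\<delta> x \<epsilon> u) x < t * \<epsilon>" "v \<in> qball d (\<delta> x \<epsilon> u) \<rho>"
  shows "Sigma_defined U W \<delta> x \<epsilon> u v \<and> Sigma \<delta> x \<epsilon> u v \<in> U x"
proof -
  let ?y = "\<delta> x \<epsilon> u" and ?z = "\<delta> (\<delta> x \<epsilon> u) \<epsilon> v"
  have "t * \<epsilon> < t * 1"
    using t(1) \<epsilon> by (intro mult_strict_left_mono) auto
  moreover have "t * 1 < t * (2 * Q)"
    using t(1) Q(1) by (intro mult_strict_left_mono) auto
  ultimately have "t * \<epsilon> < R"
    using t(2) by (simp add: mult.commute)
  then have "?y \<in> closure (qball d x R)"
    using near(1) closure_subset by (fastforce simp: qball_def)
  then have "d ?z ?y < t * \<epsilon>"
    using contract near(2) by blast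
  then have "Q * (d ?z ?y + d ?y x) < Q * (t * \<epsilon> + t * \<epsilon>)"
    using Q(1) near(1) by (intro mult_strict_left_mono add_strict_mono) auto
  then have "d ?z x < Q * (t * \<epsilon> + t * \<epsilon>)"
    using Q(2)[of ?z x ?y] by linarith
  also have "\<dots> = R * \<epsilon>"
    using t(2) by (simp add: algebra_simps)
  finally have "?z \<in> qball d x (R * \<epsilon>)"
    by (simp add: qball_def)
  also have "qball d x (R * \<epsilon>) \<subseteq> \<delta> x \<epsilon> ` qball d x R"
    by (rule dilation_ball(1)[OF \<epsilon> R_pos closure_ball_subset_U])
  also have "\<dots> \<subseteq> W x \<epsilon>"
    using dilation_image_U_subset_W[of \<epsilon> x] ball_subset_U \<epsilon> by auto
  finally have "?z \<in> W x \<epsilon>" .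
  moreover have "v \<in> U ?y"
    using ball_subset_U near(2) \<open>\<rho> \<le> R\<close> by (fastforce simp: qball_def)
  ultimately show ?thesis
    using \<epsilon> inverse_dilation_image_W[of \<epsilon> x]
    unfolding Sigma_defined_def Sigma_def by auto
qed

end

locale uniform_dilation_space = dilation_space +
  assumes uniform: "uniform_dilation_structure d U V W \<delta> R"
begin

lemma dilation_dist_linear_bound:
  assumes "compact K"
  obtains \<eta> M where "0 < \<eta>" "\<eta> \<le> 1"
    "\<And>y w \<epsilon>. y \<in> K \<Longrightarrow> w \<in> qball d y R \<Longrightarrow> \<epsilon> \<in> {0<..<\<eta>} \<Longrightarrow> d (\<delta> y \<epsilon> w) y < M * \<epsilon>"
proof -
  obtain dd where "\<forall>K. compact K \<longrightarrow> (\<forall>t>0. \<exists>\<eta>>0. \<forall>y\<in>K. \<forall>e\<in>{0<..<\<eta>}. e \<le> 1 \<longrightarrow>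
      (\<forall>u\<in>closure (qball d y R). \<forall>v\<in>closure (qball d y R).
         \<bar>d (\<delta> y e u) (\<delta> y e v) / e - dd y u v\<bar> < t))"
    using uniform unfolding uniform_dilation_structure_def by blast
  then obtain \<eta>0 where "\<eta>0 > 0" and conv: "\<forall>y\<in>K. \<forall>e\<in>{0<..<\<eta>0}. e \<le> 1 \<longrightarrow>
      (\<forall>u\<in>closure (qball d y R). \<forall>v\<in>closure (qball d y R).
         \<bar>d (\<delta> y e u) (\<delta> y e v) / e - dd y u v\<bar> < 1)"
    using assms zero_less_one by blast
  define \<eta> where "\<eta> = min \<eta>0 1"
  define \<epsilon>1 where "\<epsilon>1 = \<eta> / 2"
  have \<eta>: "0 < \<eta>" "\<eta> \<le> 1" "\<eta> \<le> \<eta>0" and \<epsilon>1: "0 < \<epsilon>1" "\<epsilon>1 < \<eta>"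
    using \<open>\<eta>0 > 0\<close> by (auto simp: \<eta>_def \<epsilon>1_def)
  have "d (\<delta> y \<epsilon> w) y < (R / \<epsilon>1 + 2) * \<epsilon>"
    if "y \<in> K" "w \<in> qball d y R" "\<epsilon> \<in> {0<..<\<eta>}" for y w \<epsilon>
  proof -
    have w: "w \<in> closure (qball d y R)" and y: "y \<in> closure (qball d y R)"
      using that(2) center_in_ball closure_subset by blast+
    \<comment> \<open>compare the rescaled distance at \<open>\<epsilon>\<close> with the one at the fixed scale \<open>\<epsilon>1\<close>\<close>
    have "\<bar>d (\<delta> y e w) (\<delta> y e y) / e - dd y w y\<bar> < 1" if "e \<in> {0<..<\<eta>}" for e
      using conv[rule_format, OF \<open>y \<in> K\<close> _ _ w y] that \<eta> by simp
    then have "\<bar>d (\<delta> y \<epsilon> w) y / \<epsilon> - dd y w y\<bar> < 1" "\<bar>d (\<delta> y \<epsilon>1 w) y / \<epsilon>1 - dd y w y\<bar> < 1"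
      using that(3) \<epsilon>1 \<eta> dilation_fixes_center[of _ y] by auto
    moreover have "d (\<delta> y \<epsilon>1 w) y / \<epsilon>1 < R / \<epsilon>1"
      using dilation_ball(2)[of \<epsilon>1 R y] \<epsilon>1 \<eta> R_pos closure_ball_subset_U that(2)
      by (auto simp: qball_def divide_strict_right_mono)
    ultimately have "d (\<delta> y \<epsilon> w) y / \<epsilon> < R / \<epsilon>1 + 2"
      by linarith
    then show ?thesis
      using that(3) by (simp add: field_simps)
  qed
  then show thesis
    using that \<eta> by blast
qed

lemma dilation_contracts_near_center:
  assumes "compact K" "0 < t"
  obtains \<eta> \<rho> where "0 < \<eta>" "\<eta> \<le> 1" "0 < \<rho>" "\<rho> \<le> R"
    "\<And>y v \<epsilon>. y \<in> K \<Longrightarrow> v \<in> qball d y \<rho> \<Longrightarrow> \<epsilon> \<in> {0<..<\<eta>} \<Longrightarrow> d (\<delta> y \<epsilon> v) y < t * \<epsilon>"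
proof -
  obtain \<eta> M where \<eta>: "0 < \<eta>" "\<eta> \<le> 1" and bound:
    "\<And>y w \<epsilon>. y \<in> K \<Longrightarrow> w \<in> qball d y R \<Longrightarrow> \<epsilon> \<in> {0<..<\<eta>} \<Longrightarrow> d (\<delta> y \<epsilon> w) y < M * \<epsilon>"
    using dilation_dist_linear_bound assms(1) by blast
  define \<mu> where "\<mu> = min (1/2) (t / (\<bar>M\<bar> + 1))"
  have "\<mu> \<le> t / (\<bar>M\<bar> + 1)"
    by (simp add: \<mu>_def)
  then have \<mu>: "0 < \<mu>" "\<mu> < 1" "\<mu> * (\<bar>M\<bar> + 1) \<le> t"
    using assms(2) by (auto simp: \<mu>_def le_divide_eq)
  have "d (\<delta> y \<epsilon> v) y < t * \<epsilon>"
    if y: "y \<in> K" and v: "v \<in> qball d y (R * \<mu>)" and \<epsilon>: "\<epsilon> \<in> {0<..<\<eta>}" for y v \<epsilon>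
  proof -
    obtain w where w: "w \<in> qball d y R" and v_eq: "v = \<delta> y \<mu> w"
      using dilation_ball[of \<mu> R y] \<mu> R_pos closure_ball_subset_U v by blast
    have "\<delta> y \<mu> w \<in> U y"
      using dilation_ball(2)[of \<mu> R y] \<mu> R_pos closure_ball_subset_U w ball_subset_U by blast
    then have "\<delta> y \<epsilon> v = \<delta> y (\<epsilon> * \<mu>) w"
      using dilation_compose[of \<epsilon> \<mu> w y] \<epsilon> \<eta> \<mu> w ball_subset_U v_eq by auto
    moreover have "\<epsilon> * \<mu> \<in> {0<..<\<eta>}"
    proof -
      have "0 < \<epsilon> * \<mu>" "\<epsilon> * \<mu> < \<epsilon>"
        using \<epsilon> \<mu> mult_strict_left_mono[of \<mu> 1 \<epsilon>] by simp_all
      then show ?thesis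
        using \<epsilon> unfolding greaterThanLessThan_iff by (intro conjI) linarith+
    qed
    ultimately have "d (\<delta> y \<epsilon> v) y < M * (\<epsilon> * \<mu>)"
      using bound y w by simp
    also have "\<dots> \<le> (\<bar>M\<bar> + 1) * (\<epsilon> * \<mu>)"
      using \<epsilon> \<mu> by (intro mult_right_mono) auto
    also have "\<dots> = \<epsilon> * (\<mu> * (\<bar>M\<bar> + 1))"
      by (simp add: algebra_simps)
    also have "\<dots> \<le> t * \<epsilon>"
      using \<epsilon> \<mu> by (simp add: mult.commute)
    finally show ?thesis .
  qed
  moreover have "0 < R * \<mu>" "R * \<mu> \<le> R"
    using R_pos \<mu> by auto
  ultimately show thesis
    using that \<eta> by blast
qed

lemma Sigma_defined_near_center:
  "\<exists>r>0. \<exists>\<epsilon>0>0. \<forall>\<epsilon>\<in>{0<..\<epsilon>0}. \<forall>u\<in>qball d x r. \<forall>v\<in>qball d x r.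
     Sigma_defined U W \<delta> x \<epsilon> u v \<and> Sigma \<delta> x \<epsilon> u v \<in> U x"
proof -
  obtain c Q where c: "c \<ge> 1" "\<And>u v. d u v \<le> c * d v u"
    and Q: "Q \<ge> 1" "\<And>u v w. d u v \<le> Q * (d u w + d w v)"
    using quasi_symmetric quasi_triangle by blast
  define t where "t = R / (2 * Q)"
  have t: "0 < t" "2 * Q * t = R"
    using R_pos Q(1) by (auto simp: t_def)
  obtain \<eta> \<rho> where \<eta>: "0 < \<eta>" "\<eta> \<le> 1" and \<rho>: "0 < \<rho>" "\<rho> \<le> R" and contract:
    "\<And>y v \<epsilon>. y \<in> closure (qball d x R) \<Longrightarrow> v \<in> qball d y \<rho> \<Longrightarrow> \<epsilon> \<in> {0<..<\<eta>}
      \<Longrightarrow> d (\<delta> y \<epsilon> v) y < t * \<epsilon>"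
    using dilation_contracts_near_center[OF compact_closure_ball t(1)] by blast
  define r where "r = \<rho> / (2 * Q)"
  define \<epsilon>0 where "\<epsilon>0 = min (\<eta> / 2) (\<rho> / (2 * Q * c * t))"
  have r: "0 < r" "r \<le> \<rho>" "Q * r = \<rho> / 2"
    using \<rho> Q(1) by (auto simp: r_def field_simps)
  have "Sigma_defined U W \<delta> x \<epsilon> u v \<and> Sigma \<delta> x \<epsilon> u v \<in> U x"
    if \<epsilon>: "\<epsilon> \<in> {0<..\<epsilon>0}" and u: "u \<in> qball d x r" and v: "v \<in> qball d x r" for \<epsilon> u v
  proof -
    have "\<epsilon> \<le> \<eta> / 2" "\<epsilon> \<le> \<rho> / (2 * Q * c * t)"
      using \<epsilon> by (simp_all add: \<epsilon>0_def)
    moreover have "0 < 2 * Q * c * t"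
      using Q(1) c(1) t(1) by simp
    ultimately have \<epsilon>': "0 < \<epsilon>" "\<epsilon> < \<eta>" "\<epsilon> < 1" "Q * c * t * \<epsilon> \<le> \<rho> / 2"
      using \<epsilon> \<eta> by (auto simp: le_divide_eq mult.commute mult.left_commute)
    define y where "y = \<delta> x \<epsilon> u"
    have "x \<in> closure (qball d x R)"
      using center_in_ball closure_subset by blast
    moreover have "u \<in> qball d x \<rho>"
      using u r(2) by (simp add: qball_def)
    ultimately have dyx: "d y x < t * \<epsilon>"
      using contract \<epsilon>' by (simp add: y_def)
    have "d v y \<le> Q * (d v x + d x y)"
      using Q(2) .
    also have "\<dots> \<le> Q * (d v x + c * d y x)"
      using Q(1) c(2)[of x y] by simp
    also have "\<dots> < Q * (r + c * (t * \<epsilon>))"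
      using v dyx Q(1) c(1) by (intro mult_strict_left_mono add_strict_mono) (auto simp: qball_def)
    also have "\<dots> \<le> \<rho>"
      using r(3) \<epsilon>'(4) by (simp add: algebra_simps)
    finally have "v \<in> qball d y \<rho>"
      by (simp add: qball_def)
    moreover have "\<And>y v. y \<in> closure (qball d x R) \<Longrightarrow> v \<in> qball d y \<rho> \<Longrightarrow> d (\<delta> y \<epsilon> v) y < t * \<epsilon>"
      using contract \<epsilon>' by simp
    ultimately show ?thesis
      using Sigma_defined_if_contracting[OF Q t \<epsilon>'(1,3) \<rho>(2)] dyx by (simp add: y_def)
  qed
  moreover have "0 < \<epsilon>0"
    using \<eta> \<rho> Q(1) c(1) t(1) by (simp add: \<epsilon>0_def)
  ultimately show ?thesis
    using r(1) by blast
qed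

end

theorem proposition4:
  fixes d :: "'a::topological_space \<Rightarrow> 'a \<Rightarrow> real"
    and U :: "'a \<Rightarrow> 'a set" and V W :: "'a \<Rightarrow> real \<Rightarrow> 'a set"
    and \<delta> :: "'a \<Rightarrow> real \<Rightarrow> 'a \<Rightarrow> 'a" and R :: real and x :: 'a
  assumes "uniform_dilation_structure d U V W \<delta> R"
  shows "\<exists>r>0. \<exists>\<epsilon>0>0. \<forall>\<epsilon>\<in>{0<..\<epsilon>0}. \<forall>u\<in>qball d x r. \<forall>v\<in>qball d x r.
           Sigma_defined U W \<delta> x \<epsilon> u v \<and> Sigma \<delta> x \<epsilon> u v \<in> U x"
proof -
  interpret uniform_dilation_space d U V W \<delta> R
    using assms by unfold_locales (simp_all add: uniform_dilation_structure_def)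
  show ?thesis
    by (rule Sigma_defined_near_center)
qed

end
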